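(* Let $n\geq 2$, $G=\mathbb{Z}_n\times\mathbb{Z}_n$, and $\beta$ a bicharacter of $G$. Let $A$ be a $G$-graded $\beta$-commutative algebra with $A_0=K$ such that, for an enumeration $g_1,\dots,g_k$ of the nonzero elements of $G$, there exist $a_j\in A_{g_j}$ with $a_1\cdots a_k\neq0$. Then $A$ is isomorphic, as a $G$-graded algebra, to a twisted group algebra $K^\alpha G$.
   Context: All algebras are associative with unit over an algebraically closed field $K$ of characteristic $0$. A bicharacter of an abelian group $G$ is a map $\beta\colon G\times G\to K^*$ with $\beta(g,h)=\beta(h,g)^{-1}$, multiplicative in each argument. A $G$-graded algebra $C$ is $\beta$-commutative if $c_gc_h=\beta(g,h)c_hc_g$ for all homogeneous $c_g\in C_g$, $c_h\in C_h$. For a 2-cocycle $\alpha\colon G\times G\to K^*$, the twisted group algebra $K^\alpha G$ has basis $\{X_g\}_{g\in G}$ with $X_gX_h=\alpha(g,h)X_{g+h}$ and grading $(K^\alpha G)_g=KX_g$. *)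

theory Defs
  imports Main "HOL-Computational_Algebra.Polynomial"
begin

definition alg_closed :: "'k::field itself \<Rightarrow> bool" where
  "alg_closed _ \<longleftrightarrow> (\<forall>p::'k poly. degree p > 0 \<longrightarrow> (\<exists>x. poly p x = 0))"

definition Zn2 :: "nat \<Rightarrow> (nat \<times> nat) set" where
  "Zn2 n = {0..<n} \<times> {0..<n}"

definition gadd :: "nat \<Rightarrow> nat \<times> nat \<Rightarrow> nat \<times> nat \<Rightarrow> nat \<times> nat" where
  "gadd n g h = ((fst g + fst h) mod n, (snd g + snd h) mod n)"

definition is_bicharacter :: "nat \<Rightarrow> (nat \<times> nat \<Rightarrow> nat \<times> nat \<Rightarrow> 'k::field) \<Rightarrow> bool" where
  "is_bicharacter n \<beta> \<longleftrightarrow>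
     (\<forall>g\<in>Zn2 n. \<forall>h\<in>Zn2 n. \<beta> g h \<noteq> 0 \<and> \<beta> g h = inverse (\<beta> h g)) \<and>
     (\<forall>g\<in>Zn2 n. \<forall>h\<in>Zn2 n. \<forall>k\<in>Zn2 n.
        \<beta> (gadd n g h) k = \<beta> g k * \<beta> h k \<and> \<beta> g (gadd n h k) = \<beta> g h * \<beta> g k)"

definition is_algebra :: "('k::field \<Rightarrow> 'a::ring_1 \<Rightarrow> 'a) \<Rightarrow> bool" where
  "is_algebra scale \<longleftrightarrow> vector_space scale \<and>
     (\<forall>c x y. scale c (x * y) = scale c x * y \<and> scale c (x * y) = x * scale c y)"

definition is_graded_algebra ::
  "('k::field \<Rightarrow> 'a::ring_1 \<Rightarrow> 'a) \<Rightarrow> nat \<Rightarrow> (nat \<times> nat \<Rightarrow> 'a set) \<Rightarrow> bool" where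
  "is_graded_algebra scale n A \<longleftrightarrow> is_algebra scale \<and>
     (\<forall>g\<in>Zn2 n. module.subspace scale (A g)) \<and>
     (\<forall>x. \<exists>!f. (\<forall>g\<in>Zn2 n. f g \<in> A g) \<and> (\<forall>g. g \<notin> Zn2 n \<longrightarrow> f g = 0) \<and>
              x = (\<Sum>g\<in>Zn2 n. f g)) \<and>
     (\<forall>g\<in>Zn2 n. \<forall>h\<in>Zn2 n. \<forall>x\<in>A g. \<forall>y\<in>A h. x * y \<in> A (gadd n g h))"

definition beta_commutative ::
  "('k::field \<Rightarrow> 'a::ring_1 \<Rightarrow> 'a) \<Rightarrow> nat \<Rightarrow> (nat \<times> nat \<Rightarrow> 'a set) \<Rightarrow>
   (nat \<times> nat \<Rightarrow> nat \<times> nat \<Rightarrow> 'k) \<Rightarrow> bool" where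
  "beta_commutative scale n A \<beta> \<longleftrightarrow>
     (\<forall>g\<in>Zn2 n. \<forall>h\<in>Zn2 n. \<forall>x\<in>A g. \<forall>y\<in>A h. x * y = scale (\<beta> g h) (y * x))"

definition is_2cocycle :: "nat \<Rightarrow> (nat \<times> nat \<Rightarrow> nat \<times> nat \<Rightarrow> 'k::field) \<Rightarrow> bool" where
  "is_2cocycle n \<alpha> \<longleftrightarrow>
     (\<forall>g\<in>Zn2 n. \<forall>h\<in>Zn2 n. \<alpha> g h \<noteq> 0) \<and>
     (\<forall>g\<in>Zn2 n. \<forall>h\<in>Zn2 n. \<forall>k\<in>Zn2 n.
        \<alpha> g h * \<alpha> (gadd n g h) k = \<alpha> h k * \<alpha> g (gadd n h k))"

text \<open>The twisted group algebra K^alpha G: elements are functions G -> K (zero outside G),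
  i.e. coordinate vectors w.r.t. the basis X_g; addition and scalar multiplication pointwise,
  multiplication determined by X_g X_h = alpha(g,h) X_(g+h).\<close>
definition tga_carrier :: "nat \<Rightarrow> (nat \<times> nat \<Rightarrow> 'k::field) set" where
  "tga_carrier n = {f. \<forall>x. x \<notin> Zn2 n \<longrightarrow> f x = 0}"

definition tga_X :: "nat \<times> nat \<Rightarrow> (nat \<times> nat \<Rightarrow> 'k::field)" where
  "tga_X g = (\<lambda>x. if x = g then 1 else 0)"

definition tga_mult :: "nat \<Rightarrow> (nat \<times> nat \<Rightarrow> nat \<times> nat \<Rightarrow> 'k::field) \<Rightarrow>
    (nat \<times> nat \<Rightarrow> 'k) \<Rightarrow> (nat \<times> nat \<Rightarrow> 'k) \<Rightarrow> (nat \<times> nat \<Rightarrow> 'k)" where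
  "tga_mult n \<alpha> f f' = (\<lambda>x. \<Sum>p\<in>{p \<in> Zn2 n \<times> Zn2 n. gadd n (fst p) (snd p) = x}.
                              \<alpha> (fst p) (snd p) * f (fst p) * f' (snd p))"

definition tga_one :: "(nat \<times> nat \<Rightarrow> nat \<times> nat \<Rightarrow> 'k::field) \<Rightarrow> (nat \<times> nat \<Rightarrow> 'k)" where
  "tga_one \<alpha> = (\<lambda>x. inverse (\<alpha> (0,0) (0,0)) * tga_X (0,0) x)"

definition graded_iso_tga ::
  "('k::field \<Rightarrow> 'a::ring_1 \<Rightarrow> 'a) \<Rightarrow> nat \<Rightarrow> (nat \<times> nat \<Rightarrow> 'a set) \<Rightarrow>
   (nat \<times> nat \<Rightarrow> nat \<times> nat \<Rightarrow> 'k) \<Rightarrow> ('a \<Rightarrow> (nat \<times> nat \<Rightarrow> 'k)) \<Rightarrow> bool" where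
  "graded_iso_tga scale n A \<alpha> \<phi> \<longleftrightarrow>
     bij_betw \<phi> UNIV (tga_carrier n) \<and>
     (\<forall>x y. \<phi> (x + y) = (\<lambda>z. \<phi> x z + \<phi> y z)) \<and>
     (\<forall>c x. \<phi> (scale c x) = (\<lambda>z. c * \<phi> x z)) \<and>
     (\<forall>x y. \<phi> (x * y) = tga_mult n \<alpha> (\<phi> x) (\<phi> y)) \<and>
     \<phi> 1 = tga_one \<alpha> \<and>
     (\<forall>g\<in>Zn2 n. \<phi> ` A g = {(\<lambda>z. c * tga_X g z) | c. True})"

end

theory Submission
  imports Defs
begin

text \<open>
  Every element of \<open>\<int>\<^sub>n \<times> \<int>\<^sub>n\<close> occurs \<open>n\<close> times as a coordinate, so the nonzero elements of \<open>G\<close>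
  sum to \<open>0\<close> and the product \<open>a\<^sub>1 \<cdots> a\<^sub>k\<close> lies in \<open>A\<^sub>0 = K\<close>: it is a nonzero scalar. Using
  \<open>\<beta>\<close>-commutativity, each \<open>a\<^sub>j\<close> can be moved to either end of this product, which exhibits a
  homogeneous two-sided inverse of \<open>a\<^sub>j\<close>. If \<open>u \<in> A\<^sub>g\<close> has an inverse \<open>v \<in> A\<^sub>e\<close>, then \<open>g + e = 0\<close>
  and \<open>x = u (v x)\<close> with \<open>v x \<in> A\<^sub>0 = K\<close> for every \<open>x \<in> A\<^sub>g\<close>, so \<open>A\<^sub>g = K u\<close>. Thus every
  component is spanned by an invertible element \<open>U\<^sub>g\<close>, and the coordinates with respect to this
  homogeneous basis identify \<open>A\<close> with \<open>K\<^sup>\<alpha>G\<close>, where \<open>U\<^sub>g U\<^sub>h = \<alpha>(g,h) U\<^sub>g\<^sub>+\<^sub>h\<close>.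
\<close>

definition gsum :: "nat \<Rightarrow> (nat \<times> nat) list \<Rightarrow> nat \<times> nat" where
  "gsum n gs = foldr (gadd n) gs (0,0)"

lemma gsum_eq: "gsum n gs = (sum_list (map fst gs) mod n, sum_list (map snd gs) mod n)"
  unfolding gsum_def by (induction gs) (simp_all add: gadd_def mod_add_right_eq)

lemma zero_in_Zn2: "n > 0 \<Longrightarrow> (0,0) \<in> Zn2 n"
  by (simp add: Zn2_def)

lemma gadd_in_Zn2: "n > 0 \<Longrightarrow> gadd n g h \<in> Zn2 n"
  by (simp add: Zn2_def gadd_def)

lemma gsum_in_Zn2: "n > 0 \<Longrightarrow> gsum n gs \<in> Zn2 n"
  by (simp add: gsum_eq Zn2_def)

lemma gadd_commute: "gadd n g h = gadd n h g"
  by (simp add: gadd_def add.commute)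

lemma gadd_assoc: "gadd n (gadd n g h) k = gadd n g (gadd n h k)"
  by (simp add: gadd_def mod_add_left_eq mod_add_right_eq add.assoc)

lemma sum_fst_Zn2: "sum fst (Zn2 n) = n * (\<Sum>a<n. a)"
  using sum.cartesian_product[of "\<lambda>a b. a" "{..<n}" "{..<n}"]
  by (simp add: Zn2_def atLeast0LessThan split_def sum_distrib_left mult.commute)

lemma sum_snd_Zn2: "sum snd (Zn2 n) = n * (\<Sum>a<n. a)"
  using sum.cartesian_product[of "\<lambda>a b. b" "{..<n}" "{..<n}"]
  by (simp add: Zn2_def atLeast0LessThan split_def)

lemma gsum_nonzero_elements:
  assumes "distinct gs" "set gs = Zn2 n - {(0,0)}"
  shows "gsum n gs = (0,0)"
proof -
  have "sum_list (map f gs) = sum f (Zn2 n)" if "f (0,0) = 0" for f :: "nat \<times> nat \<Rightarrow> nat"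
  proof -
    have "sum_list (map f gs) = sum f (Zn2 n - {(0,0)})"
      using assms sum_list_distinct_conv_sum_set by metis
    also have "\<dots> = sum f (Zn2 n)"
      using that by (intro sum.mono_neutral_left) (auto simp: Zn2_def)
    finally show ?thesis .
  qed
  then show ?thesis
    by (simp add: gsum_eq sum_fst_Zn2 sum_snd_Zn2)
qed


locale connected_graded_algebra =
  fixes scale :: "'k::field \<Rightarrow> 'a::ring_1 \<Rightarrow> 'a" and n :: nat and A :: "nat \<times> nat \<Rightarrow> 'a set"
  assumes graded: "is_graded_algebra scale n A"
    and n_pos: "n > 0"
    and degree_zero: "A (0,0) = range (\<lambda>c. scale c 1)"
begin

sublocale V: vector_space scale
  using graded by (simp add: is_graded_algebra_def is_algebra_def)

lemma scale_mult_left: "scale c x * y = scale c (x * y)"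
  using graded by (simp add: is_graded_algebra_def is_algebra_def)

lemma scale_mult_right: "x * scale c y = scale c (x * y)"
  using graded unfolding is_graded_algebra_def is_algebra_def by metis

lemma subspace_component: "g \<in> Zn2 n \<Longrightarrow> V.subspace (A g)"
  using graded by (simp add: is_graded_algebra_def)

lemma scale_in_component: "g \<in> Zn2 n \<Longrightarrow> x \<in> A g \<Longrightarrow> scale c x \<in> A g"
  using subspace_component V.subspace_scale by blast

lemma mult_in_component:
  "g \<in> Zn2 n \<Longrightarrow> h \<in> Zn2 n \<Longrightarrow> x \<in> A g \<Longrightarrow> y \<in> A h \<Longrightarrow> x * y \<in> A (gadd n g h)"
  using graded by (simp add: is_graded_algebra_def)

lemma one_in_degree_zero: "1 \<in> A (0,0)"
  using degree_zero by (metis V.scale_one rangeI)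

lemma finite_Zn2: "finite (Zn2 n)"
  by (simp add: Zn2_def)

definition is_decomposition :: "'a \<Rightarrow> (nat \<times> nat \<Rightarrow> 'a) \<Rightarrow> bool" where
  "is_decomposition x f \<longleftrightarrow>
     (\<forall>g\<in>Zn2 n. f g \<in> A g) \<and> (\<forall>g. g \<notin> Zn2 n \<longrightarrow> f g = 0) \<and> x = (\<Sum>g\<in>Zn2 n. f g)"

lemma ex_decomposition: "\<exists>f. is_decomposition x f"
  using graded unfolding is_decomposition_def is_graded_algebra_def by blast

lemma decomposition_unique: "is_decomposition x f \<Longrightarrow> is_decomposition x f' \<Longrightarrow> f = f'"
  using graded unfolding is_decomposition_def is_graded_algebra_def by blast

lemma decomposition_homogeneous:
  "k \<in> Zn2 n \<Longrightarrow> x \<in> A k \<Longrightarrow> is_decomposition x (\<lambda>g. if g = k then x else 0)"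
  unfolding is_decomposition_def using subspace_component V.subspace_0 by (auto simp: finite_Zn2)

lemma components_disjoint:
  assumes "g \<in> Zn2 n" "h \<in> Zn2 n" "g \<noteq> h" "x \<in> A g" "x \<in> A h"
  shows "x = 0"
  using decomposition_unique[OF decomposition_homogeneous[of g x] decomposition_homogeneous[of h x]]
    assms by (metis (full_types))

lemma prod_list_in_component:
  assumes "length as = length gs" "set gs \<subseteq> Zn2 n" "\<forall>j<length gs. as ! j \<in> A (gs ! j)"
  shows "prod_list as \<in> A (gsum n gs)"
  using assms
proof (induction gs arbitrary: as)
  case Nil
  then show ?case using one_in_degree_zero by (simp add: gsum_def)
next
  case (Cons g gs)
  then obtain a as' where as: "as = a # as'" by (cases as) auto
  have "a \<in> A g" using Cons.prems as by force
  moreover have "prod_list as' \<in> A (gsum n gs)"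
    using Cons.prems as by (intro Cons.IH) force+
  ultimately show ?case
    using mult_in_component[of g "gsum n gs"] gsum_in_Zn2[OF n_pos] Cons.prems as
    by (simp add: gsum_def)
qed

lemma two_sided_inverse_if_scalar_products:
  assumes "a * w = scale c 1" "w * a = scale d 1" "c \<noteq> 0" "d \<noteq> 0"
  shows "a * scale (inverse c) w = 1" "scale (inverse c) w * a = 1"
proof -
  show right: "a * scale (inverse c) w = 1"
    using assms(1,3) by (simp add: scale_mult_right)
  have "scale (inverse d) w * a = 1"
    using assms(2,4) by (simp add: scale_mult_left)
  then have "scale (inverse d) w = scale (inverse c) w"
    using right by (metis mult.assoc mult_1_left mult_1_right)
  with \<open>scale (inverse d) w * a = 1\<close> show "scale (inverse c) w * a = 1"
    by simp
qed

lemma factor_of_nonzero_scalar_invertible: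
  assumes comm: "beta_commutative scale n A \<beta>"
    and g: "g \<in> Zn2 n" and l: "l \<in> Zn2 n" and r: "r \<in> Zn2 n"
    and a: "a \<in> A g" and L: "L \<in> A l" and R: "R \<in> A r"
    and \<beta>_nz: "\<beta> l g \<noteq> 0" "\<beta> g r \<noteq> 0"
    and LaR: "L * (a * R) = scale c 1" and "c \<noteq> 0"
  shows "\<exists>v\<in>A (gadd n l r). a * v = 1 \<and> v * a = 1"
proof -
  have La: "L * a = scale (\<beta> l g) (a * L)" and aR: "a * R = scale (\<beta> g r) (R * a)"
    using comm a L R g l r unfolding beta_commutative_def by blast+
  have "scale (\<beta> l g) (a * (L * R)) = scale c 1"
    using LaR La by (simp add: mult.assoc[symmetric] scale_mult_left)
  then have left: "a * (L * R) = scale (inverse (\<beta> l g) * c) 1"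
    using \<beta>_nz by (metis V.scale_scale V.scale_one left_inverse)
  have "scale (\<beta> g r) ((L * R) * a) = scale c 1"
    using LaR aR by (simp add: mult.assoc scale_mult_right)
  then have right: "(L * R) * a = scale (inverse (\<beta> g r) * c) 1"
    using \<beta>_nz by (metis V.scale_scale V.scale_one left_inverse)
  have "scale (inverse (inverse (\<beta> l g) * c)) (L * R) \<in> A (gadd n l r)"
    using scale_in_component[OF gadd_in_Zn2[OF n_pos]] mult_in_component[OF l r L R] by blast
  with two_sided_inverse_if_scalar_products[OF left right] \<beta>_nz \<open>c \<noteq> 0\<close> show ?thesis
    by auto
qed

lemma prod_list_factor_invertible:
  assumes comm: "beta_commutative scale n A \<beta>" and bichar: "is_bicharacter n \<beta>"
    and gs: "distinct gs" "set gs = Zn2 n - {(0,0)}" "length as = length gs"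
      "\<forall>j<length gs. as ! j \<in> A (gs ! j)" "prod_list as \<noteq> 0"
    and j: "j < length gs"
  shows "\<exists>e\<in>Zn2 n. \<exists>v\<in>A e. as ! j * v = 1 \<and> v * as ! j = 1"
proof -
  have Zn2: "set gs \<subseteq> Zn2 n" "gs ! j \<in> Zn2 n"
    using gs(2) j nth_mem by auto
  have "prod_list as \<in> A (0,0)"
    using prod_list_in_component[OF gs(3) Zn2(1) gs(4)] gsum_nonzero_elements[OF gs(1,2)] by simp
  then obtain c where c: "prod_list as = scale c 1"
    using degree_zero by auto
  with gs(5) have "c \<noteq> 0" by auto
  let ?L = "prod_list (take j as)" and ?R = "prod_list (drop (Suc j) as)"
  let ?l = "gsum n (take j gs)" and ?r = "gsum n (drop (Suc j) gs)"
  have LaR: "?L * (as ! j * ?R) = scale c 1"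
    using c id_take_nth_drop[of j as] j gs(3) by (metis prod_list.Cons prod_list.append)
  have L: "?L \<in> A ?l"
    using gs Zn2 by (intro prod_list_in_component) (auto dest: in_set_takeD)
  have R: "?R \<in> A ?r"
    using gs Zn2 j by (intro prod_list_in_component) (auto dest: in_set_dropD)
  have a: "as ! j \<in> A (gs ! j)"
    using gs(4) j by blast
  have "\<beta> ?l (gs ! j) \<noteq> 0" "\<beta> (gs ! j) ?r \<noteq> 0"
    using bichar Zn2(2) gsum_in_Zn2[OF n_pos] unfolding is_bicharacter_def by blast+
  with factor_of_nonzero_scalar_invertible[OF comm Zn2(2) gsum_in_Zn2[OF n_pos]
      gsum_in_Zn2[OF n_pos] a L R _ _ LaR \<open>c \<noteq> 0\<close>]
  show ?thesis
    using gadd_in_Zn2[OF n_pos] by blast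
qed

lemma invertible_spans_component:
  assumes "1 \<noteq> (0::'a)" and g: "g \<in> Zn2 n" and e: "e \<in> Zn2 n"
    and u: "u \<in> A g" and v: "v \<in> A e" and "u * v = 1"
  shows "A g = range (\<lambda>c. scale c u)"
proof
  have "gadd n g e = (0,0)"
    using components_disjoint[OF gadd_in_Zn2[OF n_pos] zero_in_Zn2[OF n_pos] _
        mult_in_component[OF g e u v]] one_in_degree_zero assms(1) \<open>u * v = 1\<close> by force
  show "A g \<subseteq> range (\<lambda>c. scale c u)"
  proof
    fix x assume "x \<in> A g"
    then have "v * x \<in> A (0,0)"
      using mult_in_component[OF e g v] \<open>gadd n g e = (0,0)\<close> gadd_commute by metis
    then obtain c where "v * x = scale c 1"
      using degree_zero by auto
    then have "x = scale c u"
      by (metis scale_mult_right mult.assoc mult_1_left mult_1_right \<open>u * v = 1\<close>)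
    then show "x \<in> range (\<lambda>c. scale c u)" by blast
  qed
  show "range (\<lambda>c. scale c u) \<subseteq> A g"
    using scale_in_component[OF g u] by blast
qed

end


locale graded_unit_basis = connected_graded_algebra scale n A
  for scale :: "'k::field \<Rightarrow> 'a::ring_1 \<Rightarrow> 'a" and n A +
  fixes U :: "nat \<times> nat \<Rightarrow> 'a"
  assumes one_neq_zero: "(1::'a) \<noteq> 0"
    and U_in: "g \<in> Zn2 n \<Longrightarrow> U g \<in> A g"
    and U_invertible: "g \<in> Zn2 n \<Longrightarrow> \<exists>v. U g * v = 1 \<and> v * U g = 1"
    and U_spans: "g \<in> Zn2 n \<Longrightarrow> A g = range (\<lambda>c. scale c (U g))"
    and U_zero: "U (0,0) = 1"
begin

lemma U_nonzero: "g \<in> Zn2 n \<Longrightarrow> U g \<noteq> 0"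
  using U_invertible one_neq_zero by (metis mult_zero_left)

definition is_coordinates :: "'a \<Rightarrow> (nat \<times> nat \<Rightarrow> 'k) \<Rightarrow> bool" where
  "is_coordinates x f \<longleftrightarrow>
     (\<forall>g. g \<notin> Zn2 n \<longrightarrow> f g = 0) \<and> x = (\<Sum>g\<in>Zn2 n. scale (f g) (U g))"

lemma ex_coordinates: "\<exists>f. is_coordinates x f"
proof -
  obtain F where F: "is_decomposition x F"
    using ex_decomposition by blast
  then have "\<forall>g\<in>Zn2 n. \<exists>c. F g = scale c (U g)"
    using U_spans unfolding is_decomposition_def by blast
  from bchoice[OF this] obtain f where f: "\<forall>g\<in>Zn2 n. F g = scale (f g) (U g)"
    by blast
  have "x = (\<Sum>g\<in>Zn2 n. scale (if g \<in> Zn2 n then f g else 0) (U g))"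
    using F f unfolding is_decomposition_def by simp
  then have "is_coordinates x (\<lambda>g. if g \<in> Zn2 n then f g else 0)"
    unfolding is_coordinates_def by simp
  then show ?thesis by blast
qed

lemma coordinates_unique:
  assumes f: "is_coordinates x f" and f': "is_coordinates x f'"
  shows "f = f'"
proof
  fix g
  let ?F = "\<lambda>f g. if g \<in> Zn2 n then scale (f g) (U g) else 0"
  have "is_decomposition x (?F f)" "is_decomposition x (?F f')"
    using f f' U_in scale_in_component unfolding is_decomposition_def is_coordinates_def by auto
  then have "?F f = ?F f'"
    by (rule decomposition_unique)
  show "f g = f' g"
  proof (cases "g \<in> Zn2 n")
    case True
    with fun_cong[OF \<open>?F f = ?F f'\<close>, of g] U_nonzero show ?thesis by simp
  next
    case False
    with f f' show ?thesis unfolding is_coordinates_def by (metis (no_types))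
  qed
qed

definition coef :: "'a \<Rightarrow> nat \<times> nat \<Rightarrow> 'k" where
  "coef x = (SOME f. is_coordinates x f)"

lemma coef_coordinates: "is_coordinates x (coef x)"
  unfolding coef_def using ex_coordinates by (rule someI_ex)

lemma coef_eqI: "is_coordinates x f \<Longrightarrow> coef x = f"
  using coef_coordinates coordinates_unique by blast

lemma coef_outside: "g \<notin> Zn2 n \<Longrightarrow> coef x g = 0"
  using coef_coordinates unfolding is_coordinates_def by blast

lemma expansion: "x = (\<Sum>g\<in>Zn2 n. scale (coef x g) (U g))"
  using coef_coordinates unfolding is_coordinates_def by blast

lemma coef_basis_multiple:
  assumes k: "k \<in> Zn2 n"
  shows "coef (scale c (U k)) = (\<lambda>z. if z = k then c else 0)"
proof (rule coef_eqI)
  have "(\<Sum>g\<in>Zn2 n. scale (if g = k then c else 0) (U g)) = scale c (U k)"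
    using k finite_Zn2 by (simp add: if_distrib[of "\<lambda>c. scale c _"] sum.delta cong: if_cong)
  then show "is_coordinates (scale c (U k)) (\<lambda>z. if z = k then c else 0)"
    unfolding is_coordinates_def using k by auto
qed

lemma coef_zero: "coef 0 = (\<lambda>z. 0)"
  using coef_basis_multiple[OF zero_in_Zn2[OF n_pos], of 0] by simp

lemma coef_add: "coef (x + y) = (\<lambda>z. coef x z + coef y z)"
proof (intro coef_eqI, unfold is_coordinates_def, safe)
  show "coef x g + coef y g = 0" if "g \<notin> Zn2 n" for g
    using coef_outside that by simp
  have "x + y = (\<Sum>g\<in>Zn2 n. scale (coef x g) (U g)) + (\<Sum>g\<in>Zn2 n. scale (coef y g) (U g))"
    by (intro arg_cong2[where f = "(+)"] expansion)
  also have "\<dots> = (\<Sum>g\<in>Zn2 n. scale (coef x g + coef y g) (U g))"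
    by (simp add: sum.distrib[symmetric] V.scale_left_distrib)
  finally show "x + y = (\<Sum>g\<in>Zn2 n. scale (coef x g + coef y g) (U g))" .
qed

lemma coef_sum: "finite I \<Longrightarrow> coef (\<Sum>i\<in>I. f i) = (\<lambda>z. \<Sum>i\<in>I. coef (f i) z)"
  by (induction I rule: finite_induct) (simp_all add: coef_zero coef_add)

lemma coef_scale: "coef (scale c x) = (\<lambda>z. c * coef x z)"
proof (intro coef_eqI, unfold is_coordinates_def, safe)
  show "c * coef x g = 0" if "g \<notin> Zn2 n" for g
    using coef_outside that by simp
  have "scale c x = scale c (\<Sum>g\<in>Zn2 n. scale (coef x g) (U g))"
    by (rule arg_cong[OF expansion])
  also have "\<dots> = (\<Sum>g\<in>Zn2 n. scale (c * coef x g) (U g))"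
    by (simp add: V.scale_sum_right)
  finally show "scale c x = (\<Sum>g\<in>Zn2 n. scale (c * coef x g) (U g))" .
qed

definition \<alpha> :: "nat \<times> nat \<Rightarrow> nat \<times> nat \<Rightarrow> 'k" where
  "\<alpha> g h = coef (U g * U h) (gadd n g h)"

lemma U_mult:
  assumes "g \<in> Zn2 n" "h \<in> Zn2 n"
  shows "U g * U h = scale (\<alpha> g h) (U (gadd n g h))"
proof -
  have gh: "gadd n g h \<in> Zn2 n"
    using gadd_in_Zn2 n_pos by blast
  have "U g * U h \<in> A (gadd n g h)"
    using mult_in_component assms U_in by blast
  then obtain c where c: "U g * U h = scale c (U (gadd n g h))"
    using U_spans[OF gh] by auto
  then have "\<alpha> g h = c"
    unfolding \<alpha>_def c coef_basis_multiple[OF gh] by simp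
  with c show ?thesis by simp
qed

lemma \<alpha>_nonzero:
  assumes g: "g \<in> Zn2 n" and h: "h \<in> Zn2 n"
  shows "\<alpha> g h \<noteq> 0"
proof
  assume "\<alpha> g h = 0"
  then have "U g * U h = 0"
    using U_mult[OF g h] by simp
  moreover obtain v w where "v * U g = 1" "w * U h = 1"
    using U_invertible g h by blast
  ultimately have "(1::'a) = 0"
    by (metis mult.assoc mult_1_left mult_zero_left mult_zero_right)
  with one_neq_zero show False ..
qed

lemma \<alpha>_cocycle: "is_2cocycle n \<alpha>"
  unfolding is_2cocycle_def
proof (intro conjI ballI)
  show "\<alpha> g h \<noteq> 0" if "g \<in> Zn2 n" "h \<in> Zn2 n" for g h
    using \<alpha>_nonzero that .
next
  fix g h k assume g: "g \<in> Zn2 n" and h: "h \<in> Zn2 n" and k: "k \<in> Zn2 n"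
  have G: "\<And>x y. gadd n x y \<in> Zn2 n"
    using gadd_in_Zn2 n_pos by blast
  have "scale (\<alpha> g h * \<alpha> (gadd n g h) k) (U (gadd n g (gadd n h k))) = (U g * U h) * U k"
    by (simp add: U_mult g h k G scale_mult_left gadd_assoc)
  also have "\<dots> = U g * (U h * U k)"
    by (simp add: mult.assoc)
  also have "\<dots> = scale (\<alpha> h k * \<alpha> g (gadd n h k)) (U (gadd n g (gadd n h k)))"
    by (simp add: U_mult g h k G scale_mult_right mult.commute)
  finally show "\<alpha> g h * \<alpha> (gadd n g h) k = \<alpha> h k * \<alpha> g (gadd n h k)"
    using U_nonzero[OF G] by simp
qed

lemma coef_mult: "coef (x * y) = tga_mult n \<alpha> (coef x) (coef y)"
proof
  fix z
  let ?G = "Zn2 n"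
  have G: "\<And>x y. gadd n x y \<in> ?G"
    using gadd_in_Zn2 n_pos by blast
  have "x * y = (\<Sum>g\<in>?G. scale (coef x g) (U g)) * (\<Sum>h\<in>?G. scale (coef y h) (U h))"
    by (intro arg_cong2[where f = "(*)"] expansion)
  also have "\<dots> = (\<Sum>g\<in>?G. \<Sum>h\<in>?G. scale (coef y h * (coef x g * \<alpha> g h)) (U (gadd n g h)))"
    by (simp add: sum_product scale_mult_left scale_mult_right U_mult)
  finally have "coef (x * y) z =
      (\<Sum>g\<in>?G. \<Sum>h\<in>?G. if gadd n g h = z then coef y h * (coef x g * \<alpha> g h) else 0)"
    by (simp add: coef_sum finite_Zn2 coef_basis_multiple G eq_commute)
  also have "\<dots> = (\<Sum>p\<in>?G \<times> ?G. if gadd n (fst p) (snd p) = z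
                    then \<alpha> (fst p) (snd p) * coef x (fst p) * coef y (snd p) else 0)"
    unfolding sum.cartesian_product by (intro sum.cong) (auto simp: ac_simps)
  also have "\<dots> = tga_mult n \<alpha> (coef x) (coef y) z"
    unfolding tga_mult_def by (simp add: sum.inter_filter finite_Zn2)
  finally show "coef (x * y) z = tga_mult n \<alpha> (coef x) (coef y) z" .
qed

lemma coef_bij: "bij_betw coef UNIV (tga_carrier n)"
proof (rule bij_betw_imageI)
  show "inj coef"
    by (rule injI) (metis expansion)
  show "range coef = tga_carrier n"
  proof
    show "range coef \<subseteq> tga_carrier n"
      using coef_outside by (auto simp: tga_carrier_def)
    show "tga_carrier n \<subseteq> range coef"
    proof
      fix f :: "nat \<times> nat \<Rightarrow> 'k" assume "f \<in> tga_carrier n"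
      then have "coef (\<Sum>g\<in>Zn2 n. scale (f g) (U g)) = f"
        by (intro coef_eqI) (simp add: is_coordinates_def tga_carrier_def)
      then show "f \<in> range coef"
        by (metis rangeI)
    qed
  qed
qed

lemma coef_component:
  assumes g: "g \<in> Zn2 n"
  shows "coef ` A g = {(\<lambda>z. c * tga_X g z) | c. True}"
proof -
  have "coef (scale c (U g)) = (\<lambda>z. c * tga_X g z)" for c
    using coef_basis_multiple[OF g] by (auto simp: tga_X_def)
  then have "coef ` range (\<lambda>c. scale c (U g)) = range (\<lambda>c z. c * tga_X g z)"
    by (simp add: image_image)
  then show ?thesis
    unfolding U_spans[OF g] by auto
qed

lemma coef_one: "coef 1 = tga_one \<alpha>"
proof -
  have "coef 1 = tga_X (0,0)"
    using coef_basis_multiple[OF zero_in_Zn2[OF n_pos], of 1] U_zero by (auto simp: tga_X_def)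
  moreover then have "\<alpha> (0,0) (0,0) = 1"
    unfolding \<alpha>_def U_zero by (simp add: gadd_def tga_X_def)
  ultimately show ?thesis
    by (simp add: tga_one_def)
qed

lemma graded_iso_coef: "graded_iso_tga scale n A \<alpha> coef"
  unfolding graded_iso_tga_def
  using coef_bij coef_add coef_scale coef_mult coef_one coef_component by blast

end


context connected_graded_algebra
begin

lemma graded_iso_tga_if_components_spanned_by_units:
  assumes "(1::'a) \<noteq> 0"
    and units: "\<forall>g\<in>Zn2 n - {(0,0)}. \<exists>u\<in>A g. (\<exists>v. u * v = 1 \<and> v * u = 1) \<and> A g = range (\<lambda>c. scale c u)"
  shows "\<exists>\<alpha> \<phi>. is_2cocycle n \<alpha> \<and> graded_iso_tga scale n A \<alpha> \<phi>"
proof -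
  obtain u where u: "\<forall>g\<in>Zn2 n - {(0,0)}. u g \<in> A g \<and> (\<exists>v. u g * v = 1 \<and> v * u g = 1)
                                  \<and> A g = range (\<lambda>c. scale c (u g))"
    using units by metis
  define U where "U g = (if g = (0,0) then 1 else u g)" for g
  have "U g \<in> A g \<and> (\<exists>v. U g * v = 1 \<and> v * U g = 1) \<and> A g = range (\<lambda>c. scale c (U g))"
    if "g \<in> Zn2 n" for g
  proof (cases "g = (0,0)")
    case True
    then have "U g = 1"
      by (simp add: U_def)
    with True show ?thesis
      using one_in_degree_zero degree_zero by auto
  next
    case False
    then have "U g = u g"
      by (simp add: U_def)
    moreover have "g \<in> Zn2 n - {(0,0)}"
      using that False by blast
    ultimately show ?thesis
      using u by metis
  qed
  moreover have "U (0,0) = 1"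
    by (simp add: U_def)
  ultimately interpret graded_unit_basis scale n A U
    using assms(1) by unfold_locales blast+
  show ?thesis
    using \<alpha>_cocycle graded_iso_coef by blast
qed

end


theorem corollary4p3:
  fixes scale :: "'k::field_char_0 \<Rightarrow> 'a::ring_1 \<Rightarrow> 'a"
    and n :: nat
    and \<beta> :: "nat \<times> nat \<Rightarrow> nat \<times> nat \<Rightarrow> 'k"
    and A :: "nat \<times> nat \<Rightarrow> 'a set"
  assumes "alg_closed TYPE('k)"
    and "n \<ge> 2"
    and "is_bicharacter n \<beta>"
    and "is_graded_algebra scale n A"
    and "beta_commutative scale n A \<beta>"
    and "A (0,0) = range (\<lambda>c. scale c 1)"
    and "\<exists>gs as. distinct gs \<and> set gs = Zn2 n - {(0,0)} \<and> length as = length gs \<and>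
            (\<forall>j < length gs. as ! j \<in> A (gs ! j)) \<and> prod_list as \<noteq> 0"
  shows "\<exists>\<alpha> \<phi>. is_2cocycle n \<alpha> \<and> graded_iso_tga scale n A \<alpha> \<phi>"
proof -
  obtain gs as where gs: "distinct gs" "set gs = Zn2 n - {(0,0)}" "length as = length gs"
      "\<forall>j < length gs. as ! j \<in> A (gs ! j)" "prod_list as \<noteq> 0"
    using assms(7) by blast
  interpret connected_graded_algebra scale n A
    using assms(2,4,6) by unfold_locales auto
  have one: "(1::'a) \<noteq> 0"
    using gs(5) by (metis mult_1_right mult_zero_right)
  have "\<exists>u\<in>A g. (\<exists>v. u * v = 1 \<and> v * u = 1) \<and> A g = range (\<lambda>c. scale c u)"
    if g: "g \<in> Zn2 n - {(0,0)}" for g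
  proof -
    obtain j where j: "j < length gs" "gs ! j = g"
      using g gs(2) by (metis in_set_conv_nth)
    then obtain e v where "e \<in> Zn2 n" "v \<in> A e" "as ! j * v = 1" "v * as ! j = 1"
      using prod_list_factor_invertible[OF assms(5,3) gs] by blast
    then show ?thesis
      using invertible_spans_component[OF one] g gs(4) j by (metis DiffD1)
  qed
  then show ?thesis
    using graded_iso_tga_if_components_spanned_by_units[OF one] by blast
qed

end
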